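(* Let $I\subseteq\mathbb{R}_+$ be an open interval, let $p\in\mathbb{R}$ and $q<0$, and let $f:I\to\mathbb{R}_+$ be $(p,q)$-Jensen convex, i.e. \[ f\big(H_p(x,y)\big)\le H_q\big(f(x),f(y)\big)\qquad(x,y\in I). \] Then $f_{p,q}$ is convex on $I_p$, and consequently $f$ is continuous and moreover locally Lipschitz on $I$.
   Context: $\mathbb{R}_+=]0,\infty[$. For $p\in\mathbb{R}$ the power mean is $H_p(x,y)=\left(\frac{x^p+y^p}{2}\right)^{1/p}$ if $p\neq0$ and $H_0(x,y)=\sqrt{xy}$, for $x,y>0$. For $f:I\to\mathbb{R}_+$ and $(p,q)\in\mathbb{R}^2$, set $I_p=\{t^p\mid t\in I\}$ if $p\neq0$ and $I_p=\{\log t\mid t\in I\}$ if $p=0$, and define $f_{p,q}:I_p\to\mathbb{R}$ by $f_{p,q}(x)=\operatorname{sign}(q)\big(f(x^{1/p})\big)^q$ if $p\neq0,q\neq0$; $f_{p,q}(x)=\operatorname{sign}(q)\big(f(\exp x)\big)^q$ if $p=0,q\neq0$; $f_{p,q}(x)=\log f(x^{1/p})$ if $p\neq0,q=0$; $f_{p,q}(x)=\log f(\exp x)$ if $p=q=0$. *)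

theory Defs
  imports "HOL-Analysis.Analysis"
begin

definition power_mean :: "real \<Rightarrow> real \<Rightarrow> real \<Rightarrow> real" where
  "power_mean p x y = (if p = 0 then sqrt (x * y) else ((x powr p + y powr p) / 2) powr (1 / p))"

definition interval_p :: "real \<Rightarrow> real set \<Rightarrow> real set" where
  "interval_p p I = (if p = 0 then ln ` I else (\<lambda>t. t powr p) ` I)"

definition f_pq :: "real \<Rightarrow> real \<Rightarrow> (real \<Rightarrow> real) \<Rightarrow> real \<Rightarrow> real" where
  "f_pq p q f x =
     (if p \<noteq> 0 \<and> q \<noteq> 0 then sgn q * (f (x powr (1 / p))) powr q
      else if p = 0 \<and> q \<noteq> 0 then sgn q * (f (exp x)) powr q
      else if p \<noteq> 0 \<and> q = 0 then ln (f (x powr (1 / p)))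
      else ln (f (exp x)))"

definition pq_jensen_convex :: "real \<Rightarrow> real \<Rightarrow> real set \<Rightarrow> (real \<Rightarrow> real) \<Rightarrow> bool" where
  "pq_jensen_convex p q I f \<longleftrightarrow>
     (\<forall>x\<in>I. \<forall>y\<in>I. f (power_mean p x y) \<le> power_mean q (f x) (f y))"

definition locally_lipschitz_on :: "real set \<Rightarrow> (real \<Rightarrow> real) \<Rightarrow> bool" where
  "locally_lipschitz_on I f \<longleftrightarrow>
     (\<forall>x\<in>I. \<exists>e>0. \<exists>L. L-lipschitz_on (cball x e \<inter> I) f)"

end

theory Submission
  imports Defs
begin

text \<open>Substituting u = t^p (u = ln t if p = 0) turns H_p into the arithmetic mean, and
  s \<mapsto> -s^q is increasing for q < 0; hence (p,q)-Jensen convexity of f says exactly that f_{p,q}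
  is midpoint convex on I_p. Being negative, f_{p,q} is convex by the Bernstein-Doetsch argument,
  hence continuous and Lipschitz on compact subsets of the open interval I_p. Since
  f(t) = (-f_{p,q}(t^p))^(1/q) and both outer maps are continuously differentiable, f inherits
  these properties.\<close>

lemma midpoint_convex_vanishing_ends_nonpos:
  fixes h :: "real \<Rightarrow> real"
  assumes mid: "\<And>s t. s \<in> {0..1} \<Longrightarrow> t \<in> {0..1} \<Longrightarrow> h ((s + t) / 2) \<le> (h s + h t) / 2"
    and h0: "h 0 = 0" and h1: "h 1 = 0"
    and bounded: "\<And>s. s \<in> {0..1} \<Longrightarrow> h s \<le> M"
    and s0: "s0 \<in> {0..1}"
  shows "h s0 \<le> 0"
proof (rule ccontr)
  assume "\<not> h s0 \<le> 0"
  hence pos: "h s0 > 0" by simp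
  \<comment> \<open>A positive value would double indefinitely, contradicting the upper bound.\<close>
  have doubling: "\<exists>s' \<in> {0..1}. 2 * h s \<le> h s'" if "s \<in> {0..1}" for s
  proof (cases "s \<le> 1/2")
    case True
    then show ?thesis using that mid[of 0 "2 * s"] h0 by (intro bexI[of _ "2 * s"]) auto
  next
    case False
    then show ?thesis using that mid[of "2 * s - 1" 1] h1 by (intro bexI[of _ "2 * s - 1"]) auto
  qed
  have iterated: "\<exists>s \<in> {0..1}. 2 ^ n * h s0 \<le> h s" for n :: nat
  proof (induction n)
    case 0
    then show ?case using s0 by auto
  next
    case (Suc n)
    then obtain s where "s \<in> {0..1}" "2 ^ n * h s0 \<le> h s" by blast
    with doubling[of s] show ?case by force
  qed
  obtain n :: nat where "M / h s0 < real n" using reals_Archimedean2 by blast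
  also have "real n < 2 ^ n" by (rule of_nat_less_two_power)
  finally have "M < 2 ^ n * h s0" using pos by (simp add: divide_less_eq)
  with iterated[of n] bounded show False by force
qed

lemma midpoint_convex_bounded_above_imp_convex_on:
  fixes g :: "real \<Rightarrow> real"
  assumes "convex J"
    and mid: "\<And>u v. u \<in> J \<Longrightarrow> v \<in> J \<Longrightarrow> g ((u + v) / 2) \<le> (g u + g v) / 2"
    and bounded: "\<And>u. u \<in> J \<Longrightarrow> g u \<le> M"
  shows "convex_on J g"
proof (rule convex_onI[OF _ \<open>convex J\<close>])
  fix t x y :: real assume t: "0 < t" "t < 1" and xy: "x \<in> J" "y \<in> J"
  define z where "z s = (1 - s) * x + s * y" for s
  define h where "h s = g (z s) - ((1 - s) * g x + s * g y)" for s
  have z_in: "z s \<in> J" if "s \<in> {0..1}" for s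
    using convexD[OF \<open>convex J\<close> xy, of "1 - s" s] that by (simp add: z_def)
  have "h t \<le> 0"
  proof (rule midpoint_convex_vanishing_ends_nonpos[where h = h and M = "M + \<bar>g x\<bar> + \<bar>g y\<bar>"])
    fix s s' :: real assume s: "s \<in> {0..1}" "s' \<in> {0..1}"
    have "z ((s + s') / 2) = (z s + z s') / 2" by (simp add: z_def field_simps)
    then have "g (z ((s + s') / 2)) \<le> (g (z s) + g (z s')) / 2"
      using mid[OF z_in[OF s(1)] z_in[OF s(2)]] by metis
    then show "h ((s + s') / 2) \<le> (h s + h s') / 2"
      by (simp add: h_def field_simps)
  next
    fix s :: real assume s: "s \<in> {0..1}"
    have "\<bar>(1 - s) * g x\<bar> \<le> \<bar>g x\<bar>" "\<bar>s * g y\<bar> \<le> \<bar>g y\<bar>"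
      using s by (auto simp: abs_mult intro: mult_left_le_one_le)
    then show "h s \<le> M + \<bar>g x\<bar> + \<bar>g y\<bar>"
      using bounded[OF z_in[OF s]] by (simp add: h_def)
  qed (use t in \<open>simp_all add: h_def z_def\<close>)
  then show "g ((1 - t) *\<^sub>R x + t *\<^sub>R y) \<le> (1 - t) * g x + t * g y"
    by (simp add: h_def z_def)
qed

definition lipschitz_on_compacts :: "'a::metric_space set \<Rightarrow> ('a \<Rightarrow> 'b::metric_space) \<Rightarrow> bool" where
  "lipschitz_on_compacts U f \<longleftrightarrow> (\<forall>K. compact K \<longrightarrow> K \<subseteq> U \<longrightarrow> (\<exists>L. L-lipschitz_on K f))"

lemma lipschitz_on_compacts_subset:
  "lipschitz_on_compacts U f \<Longrightarrow> V \<subseteq> U \<Longrightarrow> lipschitz_on_compacts V f"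
  unfolding lipschitz_on_compacts_def by blast

lemma lipschitz_on_compacts_transform:
  assumes "lipschitz_on_compacts U f" and "\<And>x. x \<in> U \<Longrightarrow> g x = f x"
  shows "lipschitz_on_compacts U g"
  unfolding lipschitz_on_compacts_def
proof (intro allI impI)
  fix K assume K: "compact K" "K \<subseteq> U"
  then obtain L where "L-lipschitz_on K f" using assms(1) unfolding lipschitz_on_compacts_def by blast
  then have "L-lipschitz_on K g" by (rule lipschitz_on_transform) (use K assms(2) in auto)
  then show "\<exists>L. L-lipschitz_on K g" ..
qed

lemma lipschitz_on_compacts_compose:
  assumes f: "lipschitz_on_compacts U f" "continuous_on U f" "f ` U \<subseteq> V"
    and g: "lipschitz_on_compacts V g"
  shows "lipschitz_on_compacts U (\<lambda>x. g (f x))"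
  unfolding lipschitz_on_compacts_def
proof (intro allI impI)
  fix K assume K: "compact K" "K \<subseteq> U"
  obtain C where C: "C-lipschitz_on K f" using f(1) K unfolding lipschitz_on_compacts_def by blast
  have "compact (f ` K)" using K by (intro compact_continuous_image continuous_on_subset[OF f(2)])
  then obtain D where "D-lipschitz_on (f ` K) g"
    using g K f(3) unfolding lipschitz_on_compacts_def by blast
  with C show "\<exists>L. L-lipschitz_on K (\<lambda>x. g (f x))" by (blast intro: lipschitz_on_compose2)
qed

lemma lipschitz_on_compacts_imp_locally_lipschitz_on:
  assumes "open I" and "lipschitz_on_compacts I f"
  shows "locally_lipschitz_on I f"
  unfolding locally_lipschitz_on_def
proof
  fix x assume "x \<in> I"
  then obtain e where "e > 0" "cball x e \<subseteq> I"
    using open_contains_cball[THEN iffD1, OF \<open>open I\<close>] by blast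
  with assms(2) obtain L where "L-lipschitz_on (cball x e) f"
    unfolding lipschitz_on_compacts_def using compact_cball by blast
  then have "L-lipschitz_on (cball x e \<inter> I) f" by (rule lipschitz_on_subset) blast
  with \<open>e > 0\<close> show "\<exists>e>0. \<exists>L. L-lipschitz_on (cball x e \<inter> I) f" by blast
qed

lemma compact_subset_open_interval:
  fixes J K :: "real set"
  assumes "open J" "is_interval J" "compact K" "K \<subseteq> J" "K \<noteq> {}"
  obtains a b c d where "K \<subseteq> {a..b}" "c < a" "b < d" "c \<in> J" "d \<in> J" "{c..d} \<subseteq> J"
proof -
  obtain a where a: "a \<in> K" "\<forall>x\<in>K. a \<le> x" using compact_attains_inf[OF assms(3,5)] by blast
  obtain b where b: "b \<in> K" "\<forall>x\<in>K. x \<le> b" using compact_attains_sup[OF assms(3,5)] by blast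
  obtain e where e: "e > 0" "ball a e \<subseteq> J"
    using open_contains_ball[THEN iffD1, OF assms(1)] a(1) assms(4) by blast
  obtain e' where e': "e' > 0" "ball b e' \<subseteq> J"
    using open_contains_ball[THEN iffD1, OF assms(1)] b(1) assms(4) by blast
  have "a - e / 2 \<in> J" "b + e' / 2 \<in> J" using e e' by (auto simp: subset_iff dist_real_def)
  moreover from this have "{a - e / 2 .. b + e' / 2} \<subseteq> J"
    using assms(2) unfolding is_interval_1 by (meson atLeastAtMost_iff subsetI)
  ultimately show thesis using a b e e' by (intro that[of a b "a - e / 2" "b + e' / 2"]) auto
qed

lemma lipschitz_on_realI:
  fixes f :: "real \<Rightarrow> real"
  assumes "0 \<le> L" and "\<And>x y. x \<in> X \<Longrightarrow> y \<in> X \<Longrightarrow> x < y \<Longrightarrow> \<bar>f y - f x\<bar> \<le> L * (y - x)"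
  shows "L-lipschitz_on X f"
proof (rule lipschitz_onI[OF _ \<open>0 \<le> L\<close>])
  fix x y assume xy: "x \<in> X" "y \<in> X"
  consider "x < y" | "x = y" | "y < x" by linarith
  then show "dist (f x) (f y) \<le> L * dist x y"
    by cases (use assms(2)[OF xy] assms(2)[OF xy(2,1)] in \<open>auto simp: dist_real_def abs_minus_commute\<close>)
qed

lemma convex_on_slope_mono:
  fixes g :: "real \<Rightarrow> real"
  assumes g: "convex_on J g" and J: "a \<in> J" "b' \<in> J"
    and ord: "a < b" "a' < b'" "a \<le> a'" "b \<le> b'"
  shows "(g a - g b) / (a - b) \<le> (g a' - g b') / (a' - b')"
proof -
  have "(g a - g b) / (a - b) \<le> (g a - g b') / (a - b')"
  proof (cases "b = b'")
    case False
    with ord(1,4) show ?thesis using convex_on_slope_le(1)[OF g J, of b] by simp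
  qed simp
  also have "\<dots> \<le> (g a' - g b') / (a' - b')"
  proof (cases "a = a'")
    case False
    with ord(2,3) show ?thesis using convex_on_slope_le(2)[OF g J, of a'] by simp
  qed simp
  finally show ?thesis .
qed

lemma convex_on_lipschitz_on_Icc:
  fixes g :: "real \<Rightarrow> real"
  assumes g: "convex_on J g" and J: "c \<in> J" "d \<in> J" "{c..d} \<subseteq> J" and margins: "c < a" "b < d"
  shows "(max \<bar>(g c - g a) / (c - a)\<bar> \<bar>(g b - g d) / (b - d)\<bar>)-lipschitz_on {a..b} g"
proof (rule lipschitz_on_realI)
  fix s t assume st: "s \<in> {a..b}" "t \<in> {a..b}" "s < t"
  have in_J: "s \<in> J" "t \<in> J" using st margins J(3) by auto
  have "(g c - g a) / (c - a) \<le> (g s - g t) / (s - t)"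
    using st margins by (intro convex_on_slope_mono[OF g J(1) in_J(2)]) auto
  moreover have "(g s - g t) / (s - t) \<le> (g b - g d) / (b - d)"
    using st margins by (intro convex_on_slope_mono[OF g in_J(1) J(2)]) auto
  moreover have "(g s - g t) / (s - t) = (g t - g s) / (t - s)"
    by (metis minus_diff_eq minus_divide_divide)
  ultimately have "\<bar>(g t - g s) / (t - s)\<bar> \<le> max \<bar>(g c - g a) / (c - a)\<bar> \<bar>(g b - g d) / (b - d)\<bar>"
    by linarith
  then show "\<bar>g t - g s\<bar> \<le> max \<bar>(g c - g a) / (c - a)\<bar> \<bar>(g b - g d) / (b - d)\<bar> * (t - s)"
    using st by (simp add: abs_divide pos_divide_le_eq)
qed (simp add: le_max_iff_disj)

lemma convex_on_lipschitz_on_compacts: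
  fixes g :: "real \<Rightarrow> real"
  assumes "open J" and "convex_on J g"
  shows "lipschitz_on_compacts J g"
  unfolding lipschitz_on_compacts_def
proof (intro allI impI)
  fix K assume K: "compact K" "K \<subseteq> J"
  show "\<exists>L. L-lipschitz_on K g"
  proof (cases "K = {}")
    case False
    have "is_interval J" using convex_on_imp_convex[OF assms(2)] by (simp add: is_interval_convex_1)
    then obtain a b c d where "K \<subseteq> {a..b}" "c < a" "b < d" "c \<in> J" "d \<in> J" "{c..d} \<subseteq> J"
      using compact_subset_open_interval[OF assms(1) _ K False] by blast
    then show ?thesis by (blast intro: lipschitz_on_subset convex_on_lipschitz_on_Icc[OF assms(2)])
  qed auto
qed

lemma continuous_derivative_lipschitz_on_compacts:
  fixes f f' :: "real \<Rightarrow> real"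
  assumes "open U" "is_interval U"
    and deriv: "\<And>x. x \<in> U \<Longrightarrow> (f has_real_derivative f' x) (at x)"
    and "continuous_on U f'"
  shows "lipschitz_on_compacts U f"
  unfolding lipschitz_on_compacts_def
proof (intro allI impI)
  fix K assume K: "compact K" "K \<subseteq> U"
  show "\<exists>L. L-lipschitz_on K f"
  proof (cases "K = {}")
    case False
    then obtain a b c d where ab: "K \<subseteq> {a..b}" "c < a" "b < d" "{c..d} \<subseteq> U"
      by (rule compact_subset_open_interval[OF assms(1,2) K])
    then have ab_U: "{a..b} \<subseteq> U" by auto
    have "compact (f' ` {a..b})"
      using ab_U by (intro compact_continuous_image continuous_on_subset[OF assms(4)]) auto
    then obtain B where B: "\<And>x. x \<in> {a..b} \<Longrightarrow> \<bar>f' x\<bar> \<le> B"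
      using compact_imp_bounded bounded_real by (metis imageI)
    have "(max B 0)-lipschitz_on {a..b} f"
    proof (rule lipschitz_on_realI)
      fix x y assume xy: "x \<in> {a..b}" "y \<in> {a..b}" "x < y"
      have "(f has_real_derivative f' z) (at z)" if "x \<le> z" "z \<le> y" for z
        using xy that ab_U by (intro deriv) auto
      then obtain z where z: "x < z" "z < y" "f y - f x = (y - x) * f' z"
        using MVT2[OF xy(3)] by blast
      then have "\<bar>f' z\<bar> \<le> max B 0" using B[of z] xy by auto
      then show "\<bar>f y - f x\<bar> \<le> max B 0 * (y - x)"
        using z by (simp add: abs_mult mult.commute mult_left_mono)
    qed simp
    then show ?thesis using ab(1) lipschitz_on_subset by blast
  qed auto
qed

definition mean_scale :: "real \<Rightarrow> real \<Rightarrow> real" where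
  "mean_scale p t = (if p = 0 then ln t else t powr p)"

definition mean_unscale :: "real \<Rightarrow> real \<Rightarrow> real" where
  "mean_unscale p u = (if p = 0 then exp u else u powr (1 / p))"

lemma mean_unscale_scale: "0 < t \<Longrightarrow> mean_unscale p (mean_scale p t) = t"
  by (simp add: mean_scale_def mean_unscale_def powr_powr)

lemma mean_scale_unscale: "(p \<noteq> 0 \<Longrightarrow> 0 < u) \<Longrightarrow> mean_scale p (mean_unscale p u) = u"
  by (auto simp: mean_scale_def mean_unscale_def powr_powr)

lemma power_mean_eq_mean_unscale:
  assumes "0 < x" "0 < y"
  shows "power_mean p x y = mean_unscale p ((mean_scale p x + mean_scale p y) / 2)"
proof (cases "p = 0")
  case True
  have "exp ((ln x + ln y) / 2) ^ 2 = exp (ln x) * exp (ln y)"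
    by (simp add: power2_eq_square flip: exp_add)
  then have "sqrt (x * y) = exp ((ln x + ln y) / 2)"
    using assms by (intro real_sqrt_unique) simp_all
  with True show ?thesis by (simp add: power_mean_def mean_scale_def mean_unscale_def)
qed (simp add: power_mean_def mean_scale_def mean_unscale_def)

lemma interval_p_eq_image: "interval_p p I = mean_scale p ` I"
  by (simp add: interval_p_def mean_scale_def)

lemma interval_p_eq_vimage:
  assumes "I \<subseteq> {0<..}"
  shows "interval_p p I = {u. (p \<noteq> 0 \<longrightarrow> 0 < u) \<and> mean_unscale p u \<in> I}"
  unfolding interval_p_eq_image
proof (intro set_eqI iffI)
  fix u assume "u \<in> mean_scale p ` I"
  then obtain x where x: "x \<in> I" "u = mean_scale p x" by blast
  with assms have "0 < x" by auto
  with x show "u \<in> {u. (p \<noteq> 0 \<longrightarrow> 0 < u) \<and> mean_unscale p u \<in> I}"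
    by (simp add: mean_unscale_scale) (simp add: mean_scale_def)
next
  fix u assume u: "u \<in> {u. (p \<noteq> 0 \<longrightarrow> 0 < u) \<and> mean_unscale p u \<in> I}"
  then have "u = mean_scale p (mean_unscale p u)" by (simp add: mean_scale_unscale)
  with u show "u \<in> mean_scale p ` I" by (intro image_eqI) auto
qed

lemma open_interval_p:
  assumes "open I" "I \<subseteq> {0<..}"
  shows "open (interval_p p I)"
proof (cases "p = 0")
  case True
  then have "interval_p p I = exp -` I"
    using interval_p_eq_vimage[OF assms(2)] by (auto simp: mean_unscale_def)
  then show ?thesis using assms(1) by (auto intro!: continuous_open_vimage continuous_intros)
next
  case False
  then have "interval_p p I = {0<..} \<inter> (\<lambda>u. u powr (1 / p)) -` I"
    using interval_p_eq_vimage[OF assms(2)] by (auto simp: mean_unscale_def)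
  moreover have "continuous_on {0<..} (\<lambda>u::real. u powr (1 / p))"
    by (auto intro!: continuous_intros)
  ultimately show ?thesis using assms(1) by (simp add: continuous_open_preimage)
qed

lemma continuous_on_mean_scale: "continuous_on {0<..} (mean_scale p)"
  unfolding mean_scale_def by (cases "p = 0") (auto intro!: continuous_intros)

lemma convex_interval_p:
  assumes "is_interval I" "I \<subseteq> {0<..}"
  shows "convex (interval_p p I)"
proof -
  have "connected (mean_scale p ` I)"
    using assms is_interval_connected_1
    by (blast intro: connected_continuous_image continuous_on_subset[OF continuous_on_mean_scale])
  then show ?thesis unfolding interval_p_eq_image using is_interval_connected_1 is_interval_convex_1 by blast
qed

lemma lipschitz_on_compacts_mean_scale: "lipschitz_on_compacts {0<..} (mean_scale p)"
proof (rule continuous_derivative_lipschitz_on_compacts)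
  let ?d = "\<lambda>t. if p = 0 then inverse t else p * t powr (p - 1)"
  show "(mean_scale p has_real_derivative ?d t) (at t)" if "t \<in> {0<..}" for t
    using that unfolding mean_scale_def by (auto intro: DERIV_ln has_real_derivative_powr)
  show "continuous_on {0<..} ?d" by (cases "p = 0") (auto intro!: continuous_intros)
qed (simp_all add: is_interval_1)

lemma lipschitz_on_compacts_minus_powr: "lipschitz_on_compacts {..<0} (\<lambda>w::real. (- w) powr r)"
proof (rule continuous_derivative_lipschitz_on_compacts)
  show "((\<lambda>w. (- w) powr r) has_real_derivative - (r * (- w) powr (r - 1))) (at w)"
    if "w \<in> {..<0}" for w
  proof -
    have "((\<lambda>w. (- w) powr r) has_real_derivative r * (- w) powr (r - 1) * (- 1)) (at w)"
      using that by (intro DERIV_chain2[OF has_real_derivative_powr] derivative_eq_intros) auto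
    then show ?thesis by simp
  qed
  show "continuous_on {..<0} (\<lambda>w::real. - (r * (- w) powr (r - 1)))"
    by (auto intro!: continuous_intros)
qed (simp_all add: is_interval_1)

lemma f_pq_nonzero: "q \<noteq> 0 \<Longrightarrow> f_pq p q f u = sgn q * f (mean_unscale p u) powr q"
  by (simp add: f_pq_def mean_unscale_def)

lemma f_pq_mean_scale: "q \<noteq> 0 \<Longrightarrow> 0 < x \<Longrightarrow> f_pq p q f (mean_scale p x) = sgn q * f x powr q"
  by (simp add: f_pq_nonzero mean_unscale_scale)

lemma pq_jensen_convex_imp_midpoint_convex:
  assumes I: "is_interval I" "I \<subseteq> {0<..}" and "q < 0" and f_pos: "\<forall>x\<in>I. f x > 0"
    and jensen: "pq_jensen_convex p q I f"
    and uv: "u \<in> interval_p p I" "v \<in> interval_p p I"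
  shows "f_pq p q f ((u + v) / 2) \<le> (f_pq p q f u + f_pq p q f v) / 2"
proof -
  obtain x y where xy: "x \<in> I" "y \<in> I" "u = mean_scale p x" "v = mean_scale p y"
    using uv unfolding interval_p_eq_image by blast
  have pos: "0 < x" "0 < y" using xy I(2) by auto
  have "(u + v) / 2 \<in> interval_p p I"
    using convexD[OF convex_interval_p[OF I] uv, of "1/2" "1/2"] by (simp add: field_simps)
  then have mean_in_I: "power_mean p x y \<in> I"
    using interval_p_eq_vimage[OF I(2)] power_mean_eq_mean_unscale[OF pos] xy by simp
  define S where "S = (f x powr q + f y powr q) / 2"
  have "0 < f x" "0 < f y" using f_pos xy by auto
  then have "0 < S" by (simp add: S_def add_pos_pos)
  have "f (power_mean p x y) \<le> power_mean q (f x) (f y)"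
    using jensen xy(1,2) unfolding pq_jensen_convex_def by (elim ballE) auto
  also have "\<dots> = S powr (1 / q)" using \<open>q < 0\<close> by (simp add: power_mean_def S_def)
  finally have "(S powr (1 / q)) powr q \<le> f (power_mean p x y) powr q"
    using \<open>q < 0\<close> f_pos mean_in_I by (intro powr_mono2') auto
  then have "S \<le> f (power_mean p x y) powr q"
    using \<open>0 < S\<close> \<open>q < 0\<close> by (simp add: powr_powr)
  moreover have "f_pq p q f u = - (f x powr q)" "f_pq p q f v = - (f y powr q)"
    using \<open>q < 0\<close> xy pos by (simp_all add: f_pq_mean_scale)
  moreover have "f_pq p q f ((u + v) / 2) = - (f (power_mean p x y) powr q)"
    using \<open>q < 0\<close> xy by (simp add: f_pq_nonzero power_mean_eq_mean_unscale[OF pos])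
  ultimately show ?thesis by (simp add: S_def)
qed

lemma pq_jensen_convex_imp_convex_on_f_pq:
  assumes I: "is_interval I" "I \<subseteq> {0<..}" and "q < 0" and f_pos: "\<forall>x\<in>I. f x > 0"
    and jensen: "pq_jensen_convex p q I f"
  shows "convex_on (interval_p p I) (f_pq p q f)"
proof (rule midpoint_convex_bounded_above_imp_convex_on[where M = 0])
  show "convex (interval_p p I)" by (rule convex_interval_p[OF I])
  show "f_pq p q f ((u + v) / 2) \<le> (f_pq p q f u + f_pq p q f v) / 2"
    if "u \<in> interval_p p I" "v \<in> interval_p p I" for u v
    by (rule pq_jensen_convex_imp_midpoint_convex[OF assms that])
  show "f_pq p q f u \<le> 0" if "u \<in> interval_p p I" for u
    using that \<open>q < 0\<close> I(2) unfolding interval_p_eq_image by (auto simp: f_pq_mean_scale)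
qed

theorem corollary2:
  fixes I :: "real set" and f :: "real \<Rightarrow> real" and p q :: real
  assumes "is_interval I" and "open I" and "I \<subseteq> {0<..}"
    and "q < 0"
    and "\<forall>x\<in>I. f x > 0"
    and "pq_jensen_convex p q I f"
  shows "convex_on (interval_p p I) (f_pq p q f)
         \<and> continuous_on I f
         \<and> locally_lipschitz_on I f"
proof -
  define J g h where "J = interval_p p I" and "g = f_pq p q f" and "h = (\<lambda>w::real. (- w) powr (1 / q))"
  have J: "J = mean_scale p ` I" by (simp add: J_def interval_p_eq_image)
  have convex: "convex_on J g"
    unfolding J_def g_def by (rule pq_jensen_convex_imp_convex_on_f_pq[OF assms(1,3-6)])
  have "open J" unfolding J_def by (rule open_interval_p[OF assms(2,3)])
  have g_scale: "g (mean_scale p x) = - (f x powr q)" if "x \<in> I" for x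
    using assms(3,4) that by (auto simp: g_def f_pq_mean_scale)
  have gs_neg: "(\<lambda>x. g (mean_scale p x)) ` I \<subseteq> {..<0}" using g_scale assms(5) by auto
  have f_eq: "f x = h (g (mean_scale p x))" if "x \<in> I" for x
    using that assms(4,5) g_scale by (simp add: h_def powr_powr less_imp_le)
  have scale_cont: "continuous_on I (mean_scale p)"
    by (rule continuous_on_subset[OF continuous_on_mean_scale assms(3)])
  have gs_cont: "continuous_on I (\<lambda>x. g (mean_scale p x))"
    by (rule continuous_on_compose2[OF convex_on_continuous[OF \<open>open J\<close> convex] scale_cont])
      (simp add: J)
  have gs_lip: "lipschitz_on_compacts I (\<lambda>x. g (mean_scale p x))"
    by (rule lipschitz_on_compacts_compose[OF
          lipschitz_on_compacts_subset[OF lipschitz_on_compacts_mean_scale assms(3)] scale_cont _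
          convex_on_lipschitz_on_compacts[OF \<open>open J\<close> convex]])
      (simp add: J)
  have "continuous_on {..<0} h" by (auto simp: h_def intro!: continuous_intros)
  then have "continuous_on I (\<lambda>x. h (g (mean_scale p x)))"
    using gs_cont gs_neg by (rule continuous_on_compose2)
  then have "continuous_on I f" by (subst continuous_on_cong[OF refl f_eq])
  have "lipschitz_on_compacts I (\<lambda>x. h (g (mean_scale p x)))"
    using gs_lip gs_cont gs_neg lipschitz_on_compacts_minus_powr unfolding h_def
    by (rule lipschitz_on_compacts_compose)
  then have "lipschitz_on_compacts I f" using f_eq by (rule lipschitz_on_compacts_transform)
  with convex \<open>continuous_on I f\<close> show ?thesis
    unfolding J_def g_def using lipschitz_on_compacts_imp_locally_lipschitz_on[OF assms(2)] by blast
qed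

end
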